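(* Let $N\geq 2$ be an integer and consider $2N+1$ qubits $a_1,\dots,a_{2N+1}$. Define the $(2N+1)$-qubit graph state $$|h_{2N+1}\rangle = CZ_{(1,2)}\,CZ_{(1,N+2)}\prod_{k=3}^{N+1}\Big[CZ_{(2,k)}\,CZ_{(k,N+2)}\,CZ_{(k,k+N)}\Big]\,|+\rangle^{\otimes(2N+1)},$$ equivalently $$|h_{2N+1}\rangle=\frac{1}{2^N\sqrt{2}}\sum_{q_1,\dots,q_{2N+1}\in\{0,1\}}(-1)^{f(q_1,\dots,q_{2N+1})}|q_1,q_2,\dots,q_{2N+1}\rangle,$$ where $f(q)=q_1q_2\oplus q_1q_{N+2}\oplus\bigoplus_{k=3}^{N+1}\big(q_2q_k\oplus q_kq_{N+2}\oplus q_kq_{k+N}\big)$ (with $\oplus$ addition mod 2). Then the geometric measure of entanglement of $|h_{2N+1}\rangle$ equals $N$, i.e. $G(|h_{2N+1}\rangle\langle h_{2N+1}|)=N$.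
   Context: $|+\rangle=(|0\rangle+|1\rangle)/\sqrt2$. $CZ_{(j_1,j_2)}$ denotes the two-qubit controlled-$Z$ gate $\mathrm{diag}(1,1,1,-1)$ acting on qubits $a_{j_1},a_{j_2}$ (identity elsewhere). For a pure state $\rho$ on $(\mathbb{C}^2)^{\otimes(2N+1)}$, $\Lambda^2(\rho)=\max_{|\varphi\rangle}\langle\varphi|\rho|\varphi\rangle$, where the maximum is over fully product pure states $|\varphi\rangle=|\varphi_1\rangle\otimes\cdots\otimes|\varphi_{2N+1}\rangle$, and the geometric measure of entanglement is $G(\rho)=-2\log_2\Lambda(\rho)$. *)

theory Defs
  imports "HOL-Analysis.Analysis"
begin

text \<open>Computational basis of n qubits a_1..a_n: bit strings q with q j for j in {1..n}.\<close>
definition basis :: "nat \<Rightarrow> (nat \<Rightarrow> bool) set" where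
  "basis n = {1..n} \<rightarrow>\<^sub>E (UNIV :: bool set)"

text \<open>A pure state on n qubits is given by its amplitudes psi q, q in basis n.
  A single-qubit pure state is a pair (alpha, beta) = alpha|0> + beta|1> of norm 1.\<close>
definition product_state :: "nat \<Rightarrow> (nat \<Rightarrow> complex \<times> complex) \<Rightarrow> bool" where
  "product_state n \<phi> \<longleftrightarrow>
     (\<forall>j\<in>{1..n}. (cmod (fst (\<phi> j)))^2 + (cmod (snd (\<phi> j)))^2 = 1)"

definition product_amp :: "nat \<Rightarrow> (nat \<Rightarrow> complex \<times> complex) \<Rightarrow> (nat \<Rightarrow> bool) \<Rightarrow> complex" where
  "product_amp n \<phi> q = (\<Prod>j\<in>{1..n}. if q j then snd (\<phi> j) else fst (\<phi> j))"

definition overlap :: "nat \<Rightarrow> (nat \<Rightarrow> complex \<times> complex) \<Rightarrow> ((nat \<Rightarrow> bool) \<Rightarrow> complex) \<Rightarrow> complex" where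
  "overlap n \<phi> \<psi> = (\<Sum>q\<in>basis n. cnj (product_amp n \<phi> q) * \<psi> q)"

text \<open>Lambda^2(rho) for rho = |psi><psi|: max over product states of
  <phi|rho|phi> = |<phi|psi>|^2.\<close>
definition Lambda_sq :: "nat \<Rightarrow> ((nat \<Rightarrow> bool) \<Rightarrow> complex) \<Rightarrow> real" where
  "Lambda_sq n \<psi> = Sup {(cmod (overlap n \<phi> \<psi>))^2 | \<phi>. product_state n \<phi>}"

definition geometric_measure :: "nat \<Rightarrow> ((nat \<Rightarrow> bool) \<Rightarrow> complex) \<Rightarrow> real" where
  "geometric_measure n \<psi> = - 2 * log 2 (sqrt (Lambda_sq n \<psi>))"

definition hf :: "nat \<Rightarrow> (nat \<Rightarrow> bool) \<Rightarrow> nat" where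
  "hf N q = (of_bool (q 1 \<and> q 2) + of_bool (q 1 \<and> q (N+2))
      + (\<Sum>k=3..N+1. of_bool (q 2 \<and> q k) + of_bool (q k \<and> q (N+2)) + of_bool (q k \<and> q (k+N)))) mod 2"

definition h_state :: "nat \<Rightarrow> (nat \<Rightarrow> bool) \<Rightarrow> complex" where
  "h_state N q = (1 / (2^N * sqrt 2)) * (-1) ^ hf N q"

end

theory Submission
  imports Defs
begin

(* In the graph of |h_{2N+1}>, the two hubs 2 and N+2 are adjacent to qubit 1 and to every
   qubit k in 3..N+1, and qubit k+N is a leaf attached to k.  Once the hub bits x, y are fixed,
   the phase factorises over qubit 1 and the pairs (k, k+N) and depends on x, y only through
   s = (-1)^(x+y).  So 2^N sqrt 2 <phi|h> is a sum of two terms, each the product of a bilinear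
   form in the two hub states (of modulus at most 1) with
   A(s) = <phi_1|(|0> + s|1>) * prod_k g_k(s),   |g_k(s)|^2 <= 2.
   The parallelogram law for qubit 1 and Cauchy-Schwarz give |<phi|h>|^2 <= 2^-N, with equality
   for |0> on the qubits 1, 3..N+1 and |+> on the others; hence Lambda^2 = 2^-N and G = N.
   The argument works for every N >= 1. *)

lemma cmod_add_sq_plus_cmod_diff_sq:
  "(cmod (z + w))^2 + (cmod (z - w))^2 = 2 * ((cmod z)^2 + (cmod w)^2)"
  unfolding cmod_power2 by (simp add: power2_eq_square algebra_simps)

lemma cauchy_schwarz_two:
  fixes a b c d :: real
  shows "(a*b + c*d)^2 \<le> (a^2 + c^2) * (b^2 + d^2)"
proof -
  have "(a^2 + c^2) * (b^2 + d^2) - (a*b + c*d)^2 = (a*d - c*b)^2"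
    by (simp add: power2_eq_square algebra_simps)
  then show ?thesis
    using zero_le_power2[of "a*d - c*b"] by linarith
qed

lemma cmod_bilinear_le_1:
  assumes "(cmod m0)^2 + (cmod m1)^2 = 1" and "(cmod n0)^2 + (cmod n1)^2 = 1"
  shows "cmod (m0 * n0 + m1 * n1) \<le> 1"
proof -
  have "0 \<le> (cmod m0 - cmod n0)^2 + (cmod m1 - cmod n1)^2"
    by simp
  also have "\<dots> = 2 - 2 * (cmod m0 * cmod n0 + cmod m1 * cmod n1)"
    using assms by (simp add: power2_eq_square algebra_simps)
  finally show ?thesis
    using norm_triangle_ineq[of "m0 * n0" "m1 * n1"] by (simp add: norm_mult)
qed

definition bsign :: "bool \<Rightarrow> complex" where
  "bsign b = (if b then -1 else 1)"

definition bra :: "(nat \<Rightarrow> complex \<times> complex) \<Rightarrow> nat \<Rightarrow> bool \<Rightarrow> complex" where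
  "bra \<phi> j b = cnj (if b then snd (\<phi> j) else fst (\<phi> j))"

lemma cnj_product_amp: "cnj (product_amp n \<phi> q) = (\<Prod>j\<in>{1..n}. bra \<phi> j (q j))"
  unfolding product_amp_def bra_def by simp

lemma product_state_bra_norm:
  "product_state n \<phi> \<Longrightarrow> j \<in> {1..n} \<Longrightarrow> (cmod (bra \<phi> j False))^2 + (cmod (bra \<phi> j True))^2 = 1"
  unfolding product_state_def bra_def by simp

lemma bsign_and_mult_bsign_and:
  "bsign (a \<and> x) * bsign (a \<and> y) = (if a then bsign (x \<noteq> y) else 1)"
  by (cases a; cases x; cases y) (simp_all add: bsign_def)

lemma minus_one_power_hf:
  "(-1::complex) ^ hf N q = (if q 1 then bsign (q 2 \<noteq> q (N+2)) else 1) *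
     (\<Prod>k\<in>{3..N+1}. (if q k then bsign (q 2 \<noteq> q (N+2)) else 1) * bsign (q k \<and> q (k+N)))"
proof -
  have mod2: "(-1::complex) ^ (m mod 2) = (-1) ^ m" for m
    by (simp add: minus_one_power_iff)
  have of_bool: "(-1::complex) ^ (of_bool b) = bsign b" for b
    by (simp add: bsign_def)
  have pair: "bsign (q 2 \<and> q k) * bsign (q k \<and> q (N+2)) * bsign (q k \<and> q (k+N))
      = (if q k then bsign (q 2 \<noteq> q (N+2)) else 1) * bsign (q k \<and> q (k+N))" for k
    by (cases "q k"; cases "q 2"; cases "q (N+2)") (simp_all add: bsign_def)
  show ?thesis
    unfolding hf_def mod2 power_add power_sum of_bool bsign_and_mult_bsign_and pair ..
qed

lemma h_state_eq: "h_state N q = of_real (1 / (2^N * sqrt 2)) * (-1) ^ hf N q"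
  by (simp add: h_state_def)

lemma prod_h_qubits:
  fixes F :: "nat \<Rightarrow> 'a::comm_monoid_mult"
  assumes "1 \<le> N"
  shows "(\<Prod>j\<in>{1..2*N+1}. F j) = F 1 * F 2 * F (N+2) * (\<Prod>k\<in>{3..N+1}. F k * F (k+N))"
proof -
  define K where "K = {3..N+1}"
  have qubits: "{1..2*N+1} = insert 1 (insert 2 (insert (N+2) (K \<union> (\<lambda>k. k+N) ` K)))"
  proof (intro set_eqI iffI)
    fix i assume "i \<in> {1..2*N+1}"
    then show "i \<in> insert 1 (insert 2 (insert (N+2) (K \<union> (\<lambda>k. k+N) ` K)))"
      by (auto simp: K_def image_iff intro!: bexI[of _ "i - N"])
  qed (use assms in \<open>auto simp: K_def\<close>)
  have "(\<Prod>j\<in>K \<union> (\<lambda>k. k+N) ` K. F j) = (\<Prod>k\<in>K. F k) * (\<Prod>k\<in>K. F (k+N))"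
  proof -
    have "inj_on (\<lambda>k. k+N) K" "K \<inter> (\<lambda>k. k+N) ` K = {}" "finite K"
      by (auto simp: K_def)
    then show ?thesis
      by (simp add: prod.union_disjoint prod.reindex)
  qed
  then show ?thesis
    using assms unfolding qubits by (simp add: K_def prod.distrib mult.assoc)
qed

definition h_coords :: "nat \<Rightarrow> (bool \<times> bool \<times> bool \<times> (nat \<Rightarrow> bool \<times> bool)) set" where
  "h_coords N = UNIV \<times> UNIV \<times> UNIV \<times> ({3..N+1} \<rightarrow>\<^sub>E UNIV)"

definition h_split :: "nat \<Rightarrow> (nat \<Rightarrow> bool) \<Rightarrow> bool \<times> bool \<times> bool \<times> (nat \<Rightarrow> bool \<times> bool)" where
  "h_split N q = (q 2, q (N+2), q 1, restrict (\<lambda>k. (q k, q (k+N))) {3..N+1})"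

definition h_join :: "nat \<Rightarrow> bool \<times> bool \<times> bool \<times> (nat \<Rightarrow> bool \<times> bool) \<Rightarrow> nat \<Rightarrow> bool" where
  "h_join N = (\<lambda>(x, y, a, p) j.
     if j = 1 then a else if j = 2 then x else if j = N+2 then y
     else if j \<in> {3..N+1} then fst (p j) else if j \<in> {N+3..2*N+1} then snd (p (j-N))
     else undefined)"

lemma bij_betw_h_split:
  assumes "1 \<le> N"
  shows "bij_betw (h_split N) (basis (2*N+1)) (h_coords N)"
proof (rule bij_betw_byWitness[where f' = "h_join N"])
  have "h_join N (h_split N q) j = q j" if "q \<in> basis (2*N+1)" for q j
    using assms that by (auto simp: h_join_def h_split_def basis_def PiE_def extensional_def)
  then show "\<forall>q\<in>basis (2*N+1). h_join N (h_split N q) = q"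
    by blast
  show "\<forall>t\<in>h_coords N. h_split N (h_join N t) = t"
    using assms by (auto simp: h_join_def h_split_def h_coords_def PiE_def extensional_def)
  show "h_split N ` basis (2*N+1) \<subseteq> h_coords N"
    by (auto simp: h_split_def h_coords_def)
  show "h_join N ` h_coords N \<subseteq> basis (2*N+1)"
    using assms by (auto simp: h_join_def h_coords_def basis_def)
qed

definition single_factor :: "(nat \<Rightarrow> complex \<times> complex) \<Rightarrow> nat \<Rightarrow> complex \<Rightarrow> complex" where
  "single_factor \<phi> j s = bra \<phi> j False + s * bra \<phi> j True"

definition pair_factor :: "(nat \<Rightarrow> complex \<times> complex) \<Rightarrow> nat \<Rightarrow> nat \<Rightarrow> complex \<Rightarrow> complex" where
  "pair_factor \<phi> j l s = bra \<phi> j False * (bra \<phi> l False + bra \<phi> l True)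
     + s * bra \<phi> j True * (bra \<phi> l False - bra \<phi> l True)"

lemma sum_single_qubit:
  "(\<Sum>a\<in>UNIV. bra \<phi> j a * (if a then s else 1)) = single_factor \<phi> j s"
  by (simp add: UNIV_bool single_factor_def)

lemma sum_qubit_pair:
  "(\<Sum>(b, c)\<in>UNIV. bra \<phi> j b * bra \<phi> l c * (if b then s else 1) * bsign (b \<and> c))
     = pair_factor \<phi> j l s"
proof -
  have pairs: "(UNIV :: (bool \<times> bool) set)
      = {(False, False), (False, True), (True, False), (True, True)}"
    by auto
  show ?thesis
    unfolding pairs
    by (simp add: pair_factor_def bsign_def algebra_simps)
qed

definition reduced_amp :: "(nat \<Rightarrow> complex \<times> complex) \<Rightarrow> nat \<Rightarrow> complex \<Rightarrow> complex" where
  "reduced_amp \<phi> N s = single_factor \<phi> 1 s * (\<Prod>k\<in>{3..N+1}. pair_factor \<phi> k (k+N) s)"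

definition reduced_overlap :: "(nat \<Rightarrow> complex \<times> complex) \<Rightarrow> nat \<Rightarrow> complex" where
  "reduced_overlap \<phi> N =
     (bra \<phi> 2 False * bra \<phi> (N+2) False + bra \<phi> 2 True * bra \<phi> (N+2) True) * reduced_amp \<phi> N 1
   + (bra \<phi> 2 False * bra \<phi> (N+2) True + bra \<phi> 2 True * bra \<phi> (N+2) False) * reduced_amp \<phi> N (-1)"

definition h_summand ::
    "(nat \<Rightarrow> complex \<times> complex) \<Rightarrow> nat \<Rightarrow> bool \<times> bool \<times> bool \<times> (nat \<Rightarrow> bool \<times> bool) \<Rightarrow> complex"
  where
  "h_summand \<phi> N = (\<lambda>(x, y, a, p). bra \<phi> 2 x * bra \<phi> (N+2) y
     * (bra \<phi> 1 a * (if a then bsign (x \<noteq> y) else 1))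
     * (\<Prod>k\<in>{3..N+1}. (\<lambda>(b, c). bra \<phi> k b * bra \<phi> (k+N) c * (if b then bsign (x \<noteq> y) else 1)
                    * bsign (b \<and> c)) (p k)))"

lemma overlap_summand_eq_h_summand:
  assumes "1 \<le> N"
  shows "cnj (product_amp (2*N+1) \<phi> q) * h_state N q
      = of_real (1 / (2^N * sqrt 2)) * h_summand \<phi> N (h_split N q)"
proof -
  \<comment> \<open>K stays abstract so that the simplifier does not split off the top of {3..N+1}.\<close>
  define K where "K = {3..N+1}"
  define s where "s = bsign (q 2 \<noteq> q (N+2))"
  have "h_summand \<phi> N (h_split N q)
      = bra \<phi> 2 (q 2) * bra \<phi> (N+2) (q (N+2)) * (bra \<phi> 1 (q 1) * (if q 1 then s else 1))
        * (\<Prod>k\<in>K. bra \<phi> k (q k) * bra \<phi> (k+N) (q (k+N)) * (if q k then s else 1)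
                   * bsign (q k \<and> q (k+N)))"
    unfolding h_summand_def h_split_def s_def K_def[symmetric]
    by (simp only: prod.case restrict_apply' cong: prod.cong)
  then show ?thesis
    unfolding cnj_product_amp prod_h_qubits[OF assms] h_state_eq minus_one_power_hf
      K_def[symmetric] s_def[symmetric]
    by (simp add: prod.distrib mult_ac)
qed

lemma sum_h_summand_hubs_fixed:
  "(\<Sum>a\<in>UNIV. \<Sum>p\<in>{3..N+1} \<rightarrow>\<^sub>E UNIV. h_summand \<phi> N (x, y, a, p))
     = bra \<phi> 2 x * bra \<phi> (N+2) y * reduced_amp \<phi> N (bsign (x \<noteq> y))"
proof -
  define K where "K = {3..N+1}"
  define s where "s = bsign (x \<noteq> y)"
  define pair_term where "pair_term k = (\<lambda>(b, c). bra \<phi> k b * bra \<phi> (k+N) c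
     * (if b then s else 1) * bsign (b \<and> c))" for k
  have "(\<Sum>a\<in>UNIV. \<Sum>p\<in>K \<rightarrow>\<^sub>E UNIV. h_summand \<phi> N (x, y, a, p))
      = (\<Sum>a\<in>UNIV. bra \<phi> 2 x * bra \<phi> (N+2) y * (bra \<phi> 1 a * (if a then s else 1)))
        * (\<Sum>p\<in>K \<rightarrow>\<^sub>E UNIV. \<Prod>k\<in>K. pair_term k (p k))"
    unfolding h_summand_def pair_term_def s_def K_def[symmetric] by (simp add: sum_product)
  also have "(\<Sum>p\<in>K \<rightarrow>\<^sub>E UNIV. \<Prod>k\<in>K. pair_term k (p k)) = (\<Prod>k\<in>K. pair_factor \<phi> k (k+N) s)"
    unfolding pair_term_def sum_qubit_pair[symmetric]
    by (rule prod_sum_PiE[symmetric]) (auto simp: K_def)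
  finally show ?thesis
    unfolding reduced_amp_def K_def[symmetric] s_def[symmetric]
    by (simp add: sum_distrib_left[symmetric] sum_single_qubit)
qed

lemma overlap_h_state:
  assumes "1 \<le> N"
  shows "overlap (2*N+1) \<phi> (h_state N) = of_real (1 / (2^N * sqrt 2)) * reduced_overlap \<phi> N"
proof -
  have "(\<Sum>q\<in>basis (2*N+1). h_summand \<phi> N (h_split N q)) = (\<Sum>t\<in>h_coords N. h_summand \<phi> N t)"
    using bij_betw_h_split[OF assms] by (rule sum.reindex_bij_betw)
  also have "\<dots> = (\<Sum>x\<in>UNIV. \<Sum>y\<in>UNIV. \<Sum>a\<in>UNIV. \<Sum>p\<in>{3..N+1} \<rightarrow>\<^sub>E UNIV. h_summand \<phi> N (x, y, a, p))"
    unfolding h_coords_def sum.cartesian_product by (simp add: case_prod_beta')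
  also have "\<dots> = (\<Sum>x\<in>UNIV. \<Sum>y\<in>UNIV. bra \<phi> 2 x * bra \<phi> (N+2) y * reduced_amp \<phi> N (bsign (x \<noteq> y)))"
    unfolding sum_h_summand_hubs_fixed ..
  also have "\<dots> = reduced_overlap \<phi> N"
    by (simp add: UNIV_bool bsign_def reduced_overlap_def algebra_simps)
  finally show ?thesis
    unfolding overlap_def overlap_summand_eq_h_summand[OF assms] sum_distrib_left[symmetric] by simp
qed

lemma cmod_overlap_h_state_sq:
  assumes "1 \<le> N"
  shows "(cmod (overlap (2*N+1) \<phi> (h_state N)))^2 = (cmod (reduced_overlap \<phi> N))^2 / 2^(N+1) / 2^N"
proof -
  have scale: "\<bar>1 / (2^N * sqrt 2)\<bar>^2 = 1 / 2^(N+1) / (2::real)^N"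
    by (simp add: power2_eq_square)
  show ?thesis
    unfolding overlap_h_state[OF assms] norm_mult norm_of_real power_mult_distrib scale
    by simp
qed

lemma single_factor_parallelogram:
  assumes "product_state n \<phi>" and "j \<in> {1..n}"
  shows "(cmod (single_factor \<phi> j 1))^2 + (cmod (single_factor \<phi> j (-1)))^2 = 2"
  using cmod_add_sq_plus_cmod_diff_sq[of "bra \<phi> j False" "bra \<phi> j True"]
    product_state_bra_norm[OF assms]
  by (simp add: single_factor_def)

lemma cmod_pair_factor_sq_le:
  assumes "product_state n \<phi>" and "j \<in> {1..n}" and "l \<in> {1..n}" and "cmod s = 1"
  shows "(cmod (pair_factor \<phi> j l s))^2 \<le> 2"
proof -
  define \<alpha> where "\<alpha> = cmod (bra \<phi> l False + bra \<phi> l True)"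
  define \<beta> where "\<beta> = cmod (bra \<phi> l False - bra \<phi> l True)"
  have \<alpha>\<beta>: "\<alpha>^2 + \<beta>^2 = 2"
    using cmod_add_sq_plus_cmod_diff_sq product_state_bra_norm[OF assms(1,3)]
    by (simp add: \<alpha>_def \<beta>_def)
  have "cmod (pair_factor \<phi> j l s) \<le> cmod (bra \<phi> j False) * \<alpha> + cmod (bra \<phi> j True) * \<beta>"
    unfolding pair_factor_def \<alpha>_def \<beta>_def
    by (rule norm_triangle_le) (simp add: norm_mult assms(4))
  then have "(cmod (pair_factor \<phi> j l s))^2
      \<le> (cmod (bra \<phi> j False) * \<alpha> + cmod (bra \<phi> j True) * \<beta>)^2"
    by (simp add: power_mono)
  also have "\<dots> \<le> ((cmod (bra \<phi> j False))^2 + (cmod (bra \<phi> j True))^2) * (\<alpha>^2 + \<beta>^2)"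
    by (rule cauchy_schwarz_two)
  also have "\<dots> = 2"
    using product_state_bra_norm[OF assms(1,2)] \<alpha>\<beta> by simp
  finally show ?thesis .
qed

lemma cmod_reduced_amp_sq_le:
  assumes "product_state (2*N+1) \<phi>" and "cmod s = 1"
  shows "(cmod (reduced_amp \<phi> N s))^2 \<le> (cmod (single_factor \<phi> 1 s))^2 * 2^(N-1)"
proof -
  have pairs: "(\<Prod>k\<in>{3..N+1}. (cmod (pair_factor \<phi> k (k+N) s))^2) \<le> 2^(N-1)"
  proof -
    have "(\<Prod>k\<in>{3..N+1}. (cmod (pair_factor \<phi> k (k+N) s))^2) \<le> (\<Prod>k\<in>{3..N+1}. 2)"
      using cmod_pair_factor_sq_le[OF assms(1) _ _ assms(2)] by (intro prod_mono) auto
    then show ?thesis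
      by simp
  qed
  have "(cmod (reduced_amp \<phi> N s))^2
      = (cmod (single_factor \<phi> 1 s))^2 * (\<Prod>k\<in>{3..N+1}. (cmod (pair_factor \<phi> k (k+N) s))^2)"
    unfolding reduced_amp_def norm_mult prod_norm[symmetric] power_mult_distrib
      prod_power_distrib ..
  also have "\<dots> \<le> (cmod (single_factor \<phi> 1 s))^2 * 2^(N-1)"
    using pairs by (rule mult_left_mono) simp
  finally show ?thesis .
qed

lemma cmod_reduced_overlap_sq_le:
  assumes "product_state (2*N+1) \<phi>" and "1 \<le> N"
  shows "(cmod (reduced_overlap \<phi> N))^2 \<le> 2^(N+1)"
proof -
  define m0 m1 n0 n1 where "m0 = bra \<phi> 2 False" and "m1 = bra \<phi> 2 True"
    and "n0 = bra \<phi> (N+2) False" and "n1 = bra \<phi> (N+2) True"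
  define A where "A s = cmod (reduced_amp \<phi> N s)" for s
  have m: "(cmod m0)^2 + (cmod m1)^2 = 1" and n: "(cmod n0)^2 + (cmod n1)^2 = 1"
    using product_state_bra_norm[OF assms(1), of 2] product_state_bra_norm[OF assms(1), of "N+2"]
      assms(2)
    by (simp_all add: m0_def m1_def n0_def n1_def)
  have "cmod (reduced_overlap \<phi> N)
      \<le> cmod (m0 * n0 + m1 * n1) * A 1 + cmod (m0 * n1 + m1 * n0) * A (-1)"
    unfolding reduced_overlap_def A_def m0_def m1_def n0_def n1_def
    by (rule norm_triangle_le) (simp only: norm_mult order_refl)
  also have "\<dots> \<le> A 1 + A (-1)"
    using cmod_bilinear_le_1[OF m n] cmod_bilinear_le_1[OF m, of n1 n0] n
    by (intro add_mono mult_left_le_one_le) (simp_all add: A_def add.commute)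
  finally have "(cmod (reduced_overlap \<phi> N))^2 \<le> (A 1 + A (-1))^2"
    by (simp add: power_mono)
  also have "\<dots> \<le> 2 * ((A 1)^2 + (A (-1))^2)"
    using cauchy_schwarz_two[of 1 "A 1" 1 "A (-1)"] by simp
  also have "\<dots>
      \<le> 2 * (((cmod (single_factor \<phi> 1 1))^2 + (cmod (single_factor \<phi> 1 (-1)))^2) * 2^(N-1))"
    using cmod_reduced_amp_sq_le[OF assms(1), of 1] cmod_reduced_amp_sq_le[OF assms(1), of "-1"]
    unfolding A_def distrib_right by simp
  also have "\<dots> = 2 * 2 * 2^(N-1)"
    using single_factor_parallelogram[OF assms(1), of 1] by simp
  also have "\<dots> = 2^(N+1)"
    using assms(2) by (cases N) simp_all
  finally show ?thesis .
qed

definition h_optimal_state :: "nat \<Rightarrow> nat \<Rightarrow> complex \<times> complex" where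
  "h_optimal_state N j =
     (if j = 1 \<or> j \<in> {3..N+1} then (1, 0) else (of_real (1 / sqrt 2), of_real (1 / sqrt 2)))"

lemma product_state_h_optimal_state: "product_state n (h_optimal_state N)"
  unfolding product_state_def h_optimal_state_def by (simp add: norm_divide power_divide)

lemma reduced_overlap_h_optimal_state:
  assumes "1 \<le> N"
  shows "reduced_overlap (h_optimal_state N) N = 2 * of_real (sqrt 2) ^ (N-1)"
proof -
  define c :: complex where "c = of_real (1 / sqrt 2)"
  have cnj_c: "cnj c = c"
    by (simp add: c_def)
  have c_sq: "c * c = 1 / 2"
    by (simp add: c_def flip: of_real_mult)
  have two_c: "2 * c = of_real (sqrt 2)"
  proof -
    have "2 * (1 / sqrt 2) = (sqrt 2 :: real)"
      by (simp add: real_div_sqrt)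
    then show ?thesis
      unfolding c_def by (metis of_real_mult of_real_numeral)
  qed
  have hubs: "bra (h_optimal_state N) 2 b = c" "bra (h_optimal_state N) (N+2) b = c" for b
    using assms by (auto simp: bra_def h_optimal_state_def c_def)
  have pair: "pair_factor (h_optimal_state N) k (k+N) s = of_real (sqrt 2)"
    if "k \<in> {3..N+1}" for k s
  proof -
    have "pair_factor (h_optimal_state N) k (k+N) s = 2 * c"
      using that unfolding pair_factor_def bra_def h_optimal_state_def c_def[symmetric]
      by (simp add: cnj_c flip: mult_2)
    then show ?thesis
      using two_c by simp
  qed
  have single: "single_factor (h_optimal_state N) 1 s = 1" for s
    by (simp add: single_factor_def bra_def h_optimal_state_def)
  have "reduced_amp (h_optimal_state N) N s = of_real (sqrt 2) ^ (N-1)" for s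
  proof -
    have "(\<Prod>k\<in>{3..N+1}. pair_factor (h_optimal_state N) k (k+N) s)
        = (\<Prod>k\<in>{3..N+1}. of_real (sqrt 2))"
      by (rule prod.cong) (simp_all only: pair)
    then show ?thesis
      unfolding reduced_amp_def single by simp
  qed
  then show ?thesis
    unfolding reduced_overlap_def hubs by (simp add: c_sq)
qed

lemma cmod_overlap_h_state_sq_le:
  assumes "product_state (2*N+1) \<phi>" and "1 \<le> N"
  shows "(cmod (overlap (2*N+1) \<phi> (h_state N)))^2 \<le> 1 / 2^N"
proof -
  have "(cmod (overlap (2*N+1) \<phi> (h_state N)))^2 \<le> 2^(N+1) / 2^(N+1) / 2^N"
    unfolding cmod_overlap_h_state_sq[OF assms(2)]
    using cmod_reduced_overlap_sq_le[OF assms] by (intro divide_right_mono) simp_all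
  then show ?thesis
    by simp
qed

lemma cmod_overlap_h_optimal_state_sq:
  assumes "1 \<le> N"
  shows "(cmod (overlap (2*N+1) (h_optimal_state N) (h_state N)))^2 = 1 / 2^N"
proof -
  have "(sqrt 2 ^ (N-1))^2 = (2::real)^(N-1)"
    by (metis power_mult mult.commute real_sqrt_pow2 zero_le_numeral)
  then have "(cmod (reduced_overlap (h_optimal_state N) N))^2 = 4 * 2^(N-1)"
    unfolding reduced_overlap_h_optimal_state[OF assms] norm_mult norm_power norm_of_real
    by (simp add: power_mult_distrib)
  also have "\<dots> = 2^(N+1)"
    using assms by (cases N) simp_all
  finally show ?thesis
    unfolding cmod_overlap_h_state_sq[OF assms] by simp
qed

lemma Lambda_sq_h_state:
  assumes "1 \<le> N"
  shows "Lambda_sq (2*N+1) (h_state N) = 1 / 2^N"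
  unfolding Lambda_sq_def
proof (rule cSup_eq_maximum)
  show "1 / 2^N \<in> {(cmod (overlap (2*N+1) \<phi> (h_state N)))^2 |\<phi>. product_state (2*N+1) \<phi>}"
    unfolding mem_Collect_eq
    by (intro exI[of _ "h_optimal_state N"] conjI product_state_h_optimal_state
        cmod_overlap_h_optimal_state_sq[OF assms, symmetric])
qed (use cmod_overlap_h_state_sq_le assms in auto)

theorem proposition1:
  fixes N :: nat
  assumes "N \<ge> 2"
  shows "geometric_measure (2*N+1) (h_state N) = real N"
proof -
  have "1 \<le> N"
    using assms by simp
  have "geometric_measure (2*N+1) (h_state N) = - 2 * log 2 (root 2 (1 / 2^N))"
    unfolding geometric_measure_def Lambda_sq_h_state[OF \<open>1 \<le> N\<close>] sqrt_def ..
  also have "\<dots> = - log 2 (1 / 2^N)"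
    by (simp add: log_root)
  also have "\<dots> = real N"
    by (simp add: log_recip log_nat_power)
  finally show ?thesis .
qed

end
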